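(* $\mathcal{F}_1^{\sigma_1}\not\leq_e\mathcal{F}_2^{\sigma_2}$ and $\mathcal{F}_2^{\sigma_2}\not\leq_e\mathcal{F}_1^{\sigma_1}$ for all formalisms $\mathcal{F}_1,\mathcal{F}_2\in\{\mathrm{AF},\mathrm{SETAF},\mathrm{BADF},\mathrm{ADF}\}$ and all semantics $\sigma_1,\sigma_2\in\{\mathrm{adm},\mathrm{com},\mathrm{prf},\mathrm{mod}\}$ with $\sigma_1\neq\sigma_2$.
   Context: Let $A$ be a finite set of statements; an interpretation is $v:A\to\{\mathbf{t},\mathbf{f},\mathbf{u}\}$. The information ordering is $\mathbf{u}<_i\mathbf{t}$, $\mathbf{u}<_i\mathbf{f}$, extended pointwise; $[v]_2$ is the set of two-valued interpretations extending $v$. An ADF is $D=(A,L,C)$ with an acceptance formula $\varphi_a$ over the parents of each statement $a$. $\Gamma_D(v)(a)$ is the greatest lower bound w.r.t. $\leq_i$ (consensus: $\mathbf{t}$ if all $\mathbf{t}$, $\mathbf{f}$ if all $\mathbf{f}$, else $\mathbf{u}$) of $\{w(\varphi_a)\mid w\in[v]_2\}$. $v$ is admissible iff $v\leq_i\Gamma_D(v)$, complete iff $\Gamma_D(v)=v$, preferred iff $\leq_i$-maximal admissible, a two-valued model iff two-valued and $\Gamma_D(v)=v$. BADFs are ADFs in which every link is supporting or attacking; AFs $(A,R)$ correspond to ADFs with $\varphi_a=\bigwedge_{(b,a)\in R}\neg b$; SETAFs $(A,X)$ correspond to ADFs with $\varphi_a=\bigwedge_{(B,a)\in X}\bigvee_{a'\in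 B}\neg a'$; all inherit the four semantics. The signature of formalism $\mathcal{F}$ under semantics $\sigma$ is $\Sigma^\sigma_\mathcal{F}=\{\sigma(kb)\mid kb\in\mathcal{F}\}$, and $\mathcal{F}_1^{\sigma_1}\leq_e\mathcal{F}_2^{\sigma_2}$ iff $\Sigma^{\sigma_1}_{\mathcal{F}_1}\subseteq\Sigma^{\sigma_2}_{\mathcal{F}_2}$ (taken over the same vocabularies). *)

theory Defs
  imports Main
begin

datatype tv = T | F | U

definition interps :: "nat set \<Rightarrow> (nat \<Rightarrow> tv) set" where
  "interps A = {v. \<forall>x. x \<notin> A \<longrightarrow> v x = U}"

definition info_le :: "(nat \<Rightarrow> tv) \<Rightarrow> (nat \<Rightarrow> tv) \<Rightarrow> bool" where
  "info_le v w \<longleftrightarrow> (\<forall>a. v a = U \<or> v a = w a)"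

definition two_valued_on :: "nat set \<Rightarrow> (nat \<Rightarrow> tv) \<Rightarrow> bool" where
  "two_valued_on A v \<longleftrightarrow> (\<forall>a\<in>A. v a \<noteq> U)"

text \<open>[v]_2: two-valued interpretations over A extending v (as Boolean valuations, False outside A).\<close>
definition completions :: "nat set \<Rightarrow> (nat \<Rightarrow> tv) \<Rightarrow> (nat \<Rightarrow> bool) set" where
  "completions A v = {w. (\<forall>a\<in>A. (v a = T \<longrightarrow> w a) \<and> (v a = F \<longrightarrow> \<not> w a))
                         \<and> (\<forall>x. x \<notin> A \<longrightarrow> \<not> w x)}"

text \<open>An ADF (A, L, C): C a is the acceptance condition of a, i.e. the Boolean function
  computed by the acceptance formula phi_a (w(phi_a) = C a w).\<close>
record adf =
  stmts :: "nat set"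
  links :: "(nat \<times> nat) set"
  acc :: "nat \<Rightarrow> (nat \<Rightarrow> bool) \<Rightarrow> bool"

definition wf_adf :: "adf \<Rightarrow> bool" where
  "wf_adf D \<longleftrightarrow> finite (stmts D) \<and> links D \<subseteq> stmts D \<times> stmts D \<and>
     (\<forall>a\<in>stmts D. \<forall>w w'. (\<forall>b. (b, a) \<in> links D \<longrightarrow> w b = w' b) \<longrightarrow> acc D a w = acc D a w')"

definition Gamma :: "adf \<Rightarrow> (nat \<Rightarrow> tv) \<Rightarrow> (nat \<Rightarrow> tv)" where
  "Gamma D v a =
     (if a \<notin> stmts D then U
      else if (\<forall>w\<in>completions (stmts D) v. acc D a w) then T
      else if (\<forall>w\<in>completions (stmts D) v. \<not> acc D a w) then F
      else U)"

definition adm :: "adf \<Rightarrow> (nat \<Rightarrow> tv) set" where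
  "adm D = {v \<in> interps (stmts D). info_le v (Gamma D v)}"

definition cmp :: "adf \<Rightarrow> (nat \<Rightarrow> tv) set" where
  "cmp D = {v \<in> interps (stmts D). Gamma D v = v}"

definition prefd :: "adf \<Rightarrow> (nat \<Rightarrow> tv) set" where
  "prefd D = {v \<in> adm D. \<forall>v'\<in>adm D. info_le v v' \<longrightarrow> info_le v' v}"

definition mdl :: "adf \<Rightarrow> (nat \<Rightarrow> tv) set" where
  "mdl D = {v \<in> interps (stmts D). two_valued_on (stmts D) v \<and> Gamma D v = v}"

definition supporting :: "adf \<Rightarrow> nat \<Rightarrow> nat \<Rightarrow> bool" where
  "supporting D b a \<longleftrightarrow> (\<forall>w. acc D a w \<longrightarrow> acc D a (w(b := True)))"

definition attacking :: "adf \<Rightarrow> nat \<Rightarrow> nat \<Rightarrow> bool" where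
  "attacking D b a \<longleftrightarrow> (\<forall>w. acc D a w \<longrightarrow> acc D a (w(b := False)))"

definition badf :: "adf \<Rightarrow> bool" where
  "badf D \<longleftrightarrow> wf_adf D \<and> (\<forall>(b, a)\<in>links D. supporting D b a \<or> attacking D b a)"

definition adf_of_af :: "nat set \<Rightarrow> (nat \<times> nat) set \<Rightarrow> adf" where
  "adf_of_af A R = \<lparr>stmts = A, links = R, acc = (\<lambda>a w. \<forall>b. (b, a) \<in> R \<longrightarrow> \<not> w b)\<rparr>"

definition adf_of_setaf :: "nat set \<Rightarrow> (nat set \<times> nat) set \<Rightarrow> adf" where
  "adf_of_setaf A X = \<lparr>stmts = A, links = {(b, a). \<exists>B. (B, a) \<in> X \<and> b \<in> B},
     acc = (\<lambda>a w. \<forall>B. (B, a) \<in> X \<longrightarrow> (\<exists>a'\<in>B. \<not> w a'))\<rparr>"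

datatype formalism = AFs | SETAFs | BADFs | ADFs
datatype semantics = Adm | Com | Prf | Mod

fun kbs :: "formalism \<Rightarrow> adf set" where
  "kbs AFs = {adf_of_af A R | A R. finite A \<and> R \<subseteq> A \<times> A}"
| "kbs SETAFs = {adf_of_setaf A X | A X. finite A \<and> (\<forall>(B, a)\<in>X. B \<subseteq> A \<and> B \<noteq> {} \<and> a \<in> A)}"
| "kbs BADFs = {D. badf D}"
| "kbs ADFs = {D. wf_adf D}"

fun sem :: "semantics \<Rightarrow> adf \<Rightarrow> (nat \<Rightarrow> tv) set" where
  "sem Adm = adm"
| "sem Com = cmp"
| "sem Prf = prefd"
| "sem Mod = mdl"

definition signature :: "formalism \<Rightarrow> semantics \<Rightarrow> nat set \<Rightarrow> (nat \<Rightarrow> tv) set set" where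
  "signature Fm s A = {sem s D | D. D \<in> kbs Fm \<and> stmts D = A}"

definition le_e :: "formalism \<Rightarrow> semantics \<Rightarrow> formalism \<Rightarrow> semantics \<Rightarrow> bool" where
  "le_e F1 s1 F2 s2 \<longleftrightarrow> (\<forall>A. finite A \<longrightarrow> signature F1 s1 A \<subseteq> signature F2 s2 A)"

end

theory Submission
  imports Defs
begin

text \<open>Every pair of distinct semantics is separated by one of three tiny AFs, which lie in all
  four formalisms: a single unattacked argument, a self-attacking argument, and two mutually
  attacking arguments. The sets of interpretations they produce violate a structural property
  that the other semantics enjoys for every ADF over the same vocabulary: admissible sets contain
  the all-undecided interpretation, models never do, a preferred all-undecided interpretation is
  the only preferred one, preferred sets are nonempty, by monotonicity of \<open>Gamma\<close> two
  complete interpretations without a common decided value force the all-undecided one to be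
  complete, and over a single statement a complete set containing the undecided and the true
  interpretation also contains the false one.\<close>

definition undecided :: "nat \<Rightarrow> tv" where
  "undecided = (\<lambda>_. U)"

lemma undecided_apply [simp]: "undecided a = U"
  by (simp add: undecided_def)

lemma info_le_undecided [simp]: "info_le undecided v"
  by (simp add: info_le_def)

lemma undecided_upd_eq_iff [simp]:
  "undecided(a := x) = undecided \<longleftrightarrow> x = U" "undecided = undecided(a := x) \<longleftrightarrow> x = U"
  by (auto simp: fun_eq_iff)

lemma undecided_upd_upd_neq [simp]: "y \<noteq> U \<Longrightarrow> undecided(a := x, b := y) \<noteq> undecided"
  by (metis fun_upd_same undecided_apply)

lemma info_le_upd_undecided_iff:
  "info_le (undecided(a := x)) w \<longleftrightarrow> x = U \<or> x = w a"
  by (auto simp: info_le_def)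

lemma Gamma_outside: "a \<notin> stmts D \<Longrightarrow> Gamma D v a = U"
  by (simp add: Gamma_def)

subsection \<open>Structural properties of the semantics of arbitrary ADFs\<close>

lemma undecided_in_adm: "undecided \<in> adm D"
  by (simp add: adm_def interps_def)

lemma undecided_notin_mdl: "stmts D \<noteq> {} \<Longrightarrow> undecided \<notin> mdl D"
  by (auto simp: mdl_def two_valued_on_def)

lemma mdl_subset_cmp: "mdl D \<subseteq> cmp D"
  by (auto simp: mdl_def cmp_def)

lemma mdl_subset_prefd: "mdl D \<subseteq> prefd D"
proof
  fix v assume v: "v \<in> mdl D"
  then have "v \<in> adm D"
    by (simp add: mdl_def adm_def info_le_def)
  moreover have "info_le v' v" if "v' \<in> adm D" "info_le v v'" for v'
    using v that by (auto simp: mdl_def adm_def interps_def two_valued_on_def info_le_def) metis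
  ultimately show "v \<in> prefd D"
    by (simp add: prefd_def)
qed

lemma prefd_undecided_unique:
  assumes "undecided \<in> prefd D" and "v \<in> prefd D"
  shows "v = undecided"
proof -
  have "info_le v undecided"
    using assms by (simp add: prefd_def)
  then show ?thesis
    by (auto simp: info_le_def fun_eq_iff)
qed

lemma completions_antimono: "info_le v w \<Longrightarrow> completions A w \<subseteq> completions A v"
proof
  fix x assume "info_le v w" "x \<in> completions A w"
  then have "v a = T \<Longrightarrow> w a = T" "v a = F \<Longrightarrow> w a = F" for a
    by (metis info_le_def tv.distinct(3,5))+
  with \<open>x \<in> completions A w\<close> show "x \<in> completions A v"
    by (simp add: completions_def)
qed

lemma completions_nonempty: "(\<lambda>a. a \<in> A \<and> v a = T) \<in> completions A v"
  by (auto simp: completions_def)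

lemma Gamma_mono: "info_le v w \<Longrightarrow> info_le (Gamma D v) (Gamma D w)"
  using completions_antimono[of v w "stmts D"] completions_nonempty[of "stmts D" w]
  by (auto simp: info_le_def Gamma_def)

lemma undecided_in_cmp_if_disagreeing:
  assumes "v1 \<in> cmp D" "v2 \<in> cmp D" and disagree: "\<And>a. v1 a = U \<or> v1 a \<noteq> v2 a"
  shows "undecided \<in> cmp D"
proof -
  have "info_le (Gamma D undecided) v" if "v \<in> cmp D" for v
    using that Gamma_mono[of undecided v D] by (simp add: cmp_def)
  then have "Gamma D undecided = undecided"
    using assms by (auto simp: info_le_def fun_eq_iff) (metis disagree)
  then show ?thesis
    by (simp add: cmp_def interps_def)
qed

lemma completions_singleton:
  "completions {a} v =
     (if v a = T then {\<lambda>x. x = a} else if v a = F then {\<lambda>x. False}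
      else {\<lambda>x. x = a, \<lambda>x. False})"
  by (auto simp: completions_def fun_eq_iff)

lemma cmp_singleton_closed_under_flip:
  assumes stmts: "stmts D = {a}"
    and "undecided \<in> cmp D" and "undecided(a := T) \<in> cmp D"
  shows "undecided(a := F) \<in> cmp D"
proof -
  \<comment> \<open>the only completion of \<open>undecided(a := T)\<close> accepts \<open>a\<close>, so the completion witnessing
    \<open>Gamma D undecided a = U\<close> must be the all-false one\<close>
  have "Gamma D undecided a = U" "Gamma D (undecided(a := T)) a = T"
    using assms by (auto simp: cmp_def fun_eq_iff)
  then have "\<not> acc D a (\<lambda>x. False)"
    using stmts by (auto simp: Gamma_def completions_singleton split: if_splits)
  then have "Gamma D (undecided(a := F)) = undecided(a := F)"
    using stmts by (auto simp: fun_eq_iff Gamma_def completions_singleton)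
  then show ?thesis
    using stmts by (simp add: cmp_def interps_def)
qed

lemma prefd_nonempty:
  assumes fin: "finite (stmts D)"
  shows "prefd D \<noteq> {}"
proof -
  \<comment> \<open>an admissible interpretation deciding the most statements is preferred\<close>
  define decided where "decided v = {a \<in> stmts D. v a \<noteq> U}" for v :: "nat \<Rightarrow> tv"
  have "card (decided v) < Suc (card (stmts D))" for v
    using fin by (auto simp: decided_def intro!: card_mono le_imp_less_Suc)
  then obtain v where v: "v \<in> adm D" and max: "\<And>v'. v' \<in> adm D \<Longrightarrow> card (decided v') \<le> card (decided v)"
    using ex_has_greatest_nat[of "\<lambda>v. v \<in> adm D" undecided "\<lambda>v. card (decided v)"] undecided_in_adm
    by blast
  have "info_le v' v" if v': "v' \<in> adm D" "info_le v v'" for v'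
  proof -
    have "decided v \<subseteq> decided v'"
      using v'(2) by (auto simp: decided_def info_le_def)
    moreover have "finite (decided v')"
      using fin by (simp add: decided_def)
    ultimately have "decided v = decided v'"
      using max[OF v'(1)] by (simp add: card_seteq)
    moreover have "v' \<in> interps (stmts D)"
      using v'(1) by (simp add: adm_def)
    ultimately show ?thesis
      using v'(2) by (fastforce simp: decided_def info_le_def interps_def)
  qed
  with v have "v \<in> prefd D"
    by (simp add: prefd_def)
  then show ?thesis
    by blast
qed

subsection \<open>Abstract argumentation frameworks\<close>

lemma adf_of_af_eq_adf_of_setaf: "adf_of_af A R = adf_of_setaf A ((\<lambda>(b, a). ({b}, a)) ` R)"
  by (auto simp: adf_of_af_def adf_of_setaf_def fun_eq_iff)

lemma adf_of_af_in_kbs: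
  assumes "finite A" "R \<subseteq> A \<times> A"
  shows "adf_of_af A R \<in> kbs Fm"
proof -
  have wf: "wf_adf (adf_of_af A R)"
    using assms by (auto simp: wf_adf_def adf_of_af_def)
  moreover have "badf (adf_of_af A R)"
    using wf by (auto simp: badf_def attacking_def adf_of_af_def)
  moreover have "adf_of_setaf A ((\<lambda>(b, a). ({b}, a)) ` R) \<in> kbs SETAFs"
    using assms by (auto 0 4)
  ultimately show ?thesis
    by (cases Fm) (use assms adf_of_af_eq_adf_of_setaf in auto)
qed

lemma Gamma_adf_of_af:
  assumes R: "R \<subseteq> A \<times> A" and a: "a \<in> A"
  shows "Gamma (adf_of_af A R) v a =
    (if \<forall>b. (b, a) \<in> R \<longrightarrow> v b = F then T
     else if \<exists>b. (b, a) \<in> R \<and> v b = T then F else U)"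
proof -
  let ?D = "adf_of_af A R" and ?C = "completions A v"
  have stmts: "stmts ?D = A"
    by (simp add: adf_of_af_def)
  have acc: "acc ?D a w \<longleftrightarrow> (\<forall>b. (b, a) \<in> R \<longrightarrow> \<not> w b)" for w
    by (simp add: adf_of_af_def)
  define w0 where "w0 = (\<lambda>x. x \<in> A \<and> v x = T)"
  have w0: "w0 \<in> ?C"
    unfolding w0_def by (rule completions_nonempty)
  consider (all_out) "\<forall>b. (b, a) \<in> R \<longrightarrow> v b = F"
    | (some_in) "\<exists>b. (b, a) \<in> R \<and> v b = T"
    | (undecided_attacker) b where "(b, a) \<in> R" "v b = U" "\<forall>b. (b, a) \<in> R \<longrightarrow> v b \<noteq> T"
    by (metis tv.exhaust)
  then show ?thesis
  proof cases
    case all_out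
    then have "\<forall>w\<in>?C. acc ?D a w"
      using R by (auto simp: acc completions_def)
    then show ?thesis
      using all_out a stmts by (simp add: Gamma_def)
  next
    case some_in
    then have "\<forall>w\<in>?C. \<not> acc ?D a w"
      using R by (auto simp: acc completions_def)
    then show ?thesis
      using some_in a w0 stmts by (auto simp: Gamma_def)
  next
    case undecided_attacker
    \<comment> \<open>\<open>w0\<close> rejects every undecided attacker, and switching \<open>b\<close> on defeats \<open>a\<close>\<close>
    have "acc ?D a w0" "w0(b := True) \<in> ?C" "\<not> acc ?D a (w0(b := True))"
      using undecided_attacker R w0 by (auto simp: acc w0_def completions_def)
    then have "\<not> (\<forall>w\<in>?C. acc ?D a w)" "\<not> (\<forall>w\<in>?C. \<not> acc ?D a w)"
      using w0 by blast+
    moreover have "\<not> (\<forall>b. (b, a) \<in> R \<longrightarrow> v b = F)" "\<not> (\<exists>b. (b, a) \<in> R \<and> v b = T)"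
      using undecided_attacker by auto
    ultimately show ?thesis
      using a stmts by (simp add: Gamma_def)
  qed
qed

fun tv_neg :: "tv \<Rightarrow> tv" where
  "tv_neg T = F"
| "tv_neg F = T"
| "tv_neg U = U"

definition af_unattacked :: adf where
  "af_unattacked = adf_of_af {0} {}"

definition af_self_attacking :: adf where
  "af_self_attacking = adf_of_af {0} {(0, 0)}"

definition af_mutual_attack :: adf where
  "af_mutual_attack = adf_of_af {0, 1} {(0, 1), (1, 0)}"

lemma stmts_small_afs [simp]:
  "stmts af_unattacked = {0}" "stmts af_self_attacking = {0}" "stmts af_mutual_attack = {0, 1}"
  by (simp_all add: af_unattacked_def af_self_attacking_def af_mutual_attack_def adf_of_af_def)

lemma small_afs_in_kbs: "af_unattacked \<in> kbs Fm" "af_self_attacking \<in> kbs Fm" "af_mutual_attack \<in> kbs Fm"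
  unfolding af_unattacked_def af_self_attacking_def af_mutual_attack_def
  by (simp_all add: adf_of_af_in_kbs)

lemma Gamma_af_unattacked: "Gamma af_unattacked v = undecided(0 := T)"
  by (auto simp: fun_eq_iff Gamma_outside) (simp add: af_unattacked_def Gamma_adf_of_af)

lemma Gamma_af_self_attacking: "Gamma af_self_attacking v = undecided(0 := tv_neg (v 0))"
  by (auto simp: fun_eq_iff Gamma_outside) (cases "v 0"; simp add: af_self_attacking_def Gamma_adf_of_af)

lemma Gamma_af_mutual_attack:
  "Gamma af_mutual_attack v = undecided(0 := tv_neg (v 1), 1 := tv_neg (v 0))"
  by (auto simp: fun_eq_iff Gamma_outside)
    (cases "v 0"; cases "v 1"; simp add: af_mutual_attack_def Gamma_adf_of_af)+

lemma model_af_unattacked: "undecided(0 := T) \<in> mdl af_unattacked"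
  by (simp add: mdl_def interps_def two_valued_on_def Gamma_af_unattacked)

lemma true_in_prefd_af_unattacked: "undecided(0 := T) \<in> prefd af_unattacked"
  using model_af_unattacked mdl_subset_prefd by blast

lemma false_notin_adm_af_unattacked: "undecided(0 := F) \<notin> adm af_unattacked"
  by (simp add: adm_def Gamma_af_unattacked info_le_upd_undecided_iff)

lemma undecided_notin_cmp_af_unattacked: "undecided \<notin> cmp af_unattacked"
  by (simp add: cmp_def Gamma_af_unattacked fun_eq_iff)

lemma adm_af_self_attacking: "adm af_self_attacking = {undecided}"
proof (intro set_eqI iffI)
  fix v assume "v \<in> adm af_self_attacking"
  then obtain x where v: "v = undecided(0 := x)" and "info_le v (undecided(0 := tv_neg x))"
    by (auto simp: adm_def interps_def Gamma_af_self_attacking fun_eq_iff)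
  then have "x = U"
    by (cases x) (simp_all add: info_le_upd_undecided_iff)
  with v show "v \<in> {undecided}"
    by (simp add: fun_eq_iff)
qed (simp add: undecided_in_adm)

lemma undecided_in_cmp_af_self_attacking: "undecided \<in> cmp af_self_attacking"
  by (simp add: cmp_def interps_def Gamma_af_self_attacking fun_eq_iff)

lemma mdl_af_self_attacking: "mdl af_self_attacking = {}"
proof -
  have "v \<notin> mdl af_self_attacking" for v
  proof
    assume "v \<in> mdl af_self_attacking"
    then have "v 0 \<noteq> U" "tv_neg (v 0) = v 0"
      by (auto simp: mdl_def two_valued_on_def Gamma_af_self_attacking dest: fun_cong[of _ _ 0])
    then show False
      by (cases "v 0") simp_all
  qed
  then show ?thesis
    by blast
qed

lemma models_af_mutual_attack:
  "undecided(0 := T, 1 := F) \<in> mdl af_mutual_attack"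
  "undecided(0 := F, 1 := T) \<in> mdl af_mutual_attack"
  by (auto simp: mdl_def interps_def two_valued_on_def Gamma_af_mutual_attack fun_eq_iff)

lemma models_af_mutual_attack_disagree:
  "(undecided(0 := T, 1 := F)) a = U \<or> (undecided(0 := T, 1 := F)) a \<noteq> (undecided(0 := F, 1 := T)) a"
  by simp

lemma undecided_notin_prefd_af_mutual_attack: "undecided \<notin> prefd af_mutual_attack"
proof
  assume "undecided \<in> prefd af_mutual_attack"
  then have "undecided(0 := T, 1 := F) = undecided"
    using prefd_undecided_unique models_af_mutual_attack(1) mdl_subset_prefd by blast
  then show False
    by simp
qed

lemma undecided_in_cmp_af_mutual_attack: "undecided \<in> cmp af_mutual_attack"
  by (simp add: cmp_def interps_def Gamma_af_mutual_attack fun_eq_iff)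

subsection \<open>Separating the semantics\<close>

lemma not_le_e_if_unrealisable:
  assumes "D0 \<in> kbs F1" "finite (stmts D0)"
    and unrealisable: "\<And>D. stmts D = stmts D0 \<Longrightarrow> sem s2 D \<noteq> sem s1 D0"
  shows "\<not> le_e F1 s1 F2 s2"
proof
  assume "le_e F1 s1 F2 s2"
  then have "sem s1 D0 \<in> signature F2 s2 (stmts D0)"
    using assms(1,2) by (auto simp: le_e_def signature_def)
  then show False
    using unrealisable by (auto simp: signature_def)
qed

lemma not_le_e_Adm_Com: "\<not> le_e F1 Adm F2 Com"
proof (rule not_le_e_if_unrealisable[OF small_afs_in_kbs(1)], simp_all)
  fix D :: adf assume stmts: "stmts D = {0}"
  show "cmp D \<noteq> adm af_unattacked"
  proof
    assume eq: "cmp D = adm af_unattacked"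
    have "undecided(0 := T) \<in> adm af_unattacked"
      using true_in_prefd_af_unattacked by (simp add: prefd_def)
    then have "undecided(0 := F) \<in> cmp D"
      using cmp_singleton_closed_under_flip[OF stmts] eq undecided_in_adm by simp
    then show False
      using eq false_notin_adm_af_unattacked by simp
  qed
qed

lemma not_le_e_Com_Adm: "\<not> le_e F1 Com F2 Adm"
proof (rule not_le_e_if_unrealisable[OF small_afs_in_kbs(1)], simp_all)
  fix D :: adf
  show "adm D \<noteq> cmp af_unattacked"
    using undecided_in_adm[of D] undecided_notin_cmp_af_unattacked by blast
qed

lemma not_le_e_Adm_Prf: "\<not> le_e F1 Adm F2 Prf"
proof (rule not_le_e_if_unrealisable[OF small_afs_in_kbs(1)], simp_all)
  fix D :: adf
  have "undecided(0 := T) \<in> adm af_unattacked"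
    using true_in_prefd_af_unattacked by (simp add: prefd_def)
  moreover have "undecided(0 := T) \<noteq> undecided"
    by simp
  ultimately show "prefd D \<noteq> adm af_unattacked"
    using prefd_undecided_unique[of D "undecided(0 := T)"] undecided_in_adm[of af_unattacked] by blast
qed

lemma not_le_e_Prf_Adm: "\<not> le_e F1 Prf F2 Adm"
proof (rule not_le_e_if_unrealisable[OF small_afs_in_kbs(1)], simp_all)
  fix D :: adf
  have "undecided \<notin> prefd af_unattacked"
    using prefd_undecided_unique[of af_unattacked "undecided(0 := T)"] true_in_prefd_af_unattacked
    by auto
  then show "adm D \<noteq> prefd af_unattacked"
    using undecided_in_adm[of D] by blast
qed

lemma not_le_e_Adm_Mod: "\<not> le_e F1 Adm F2 Mod"
proof (rule not_le_e_if_unrealisable[OF small_afs_in_kbs(2)], simp_all)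
  fix D :: adf assume "stmts D = {0}"
  then show "mdl D \<noteq> adm af_self_attacking"
    using undecided_notin_mdl[of D] undecided_in_adm[of af_self_attacking] by auto
qed

lemma not_le_e_Mod_Adm: "\<not> le_e F1 Mod F2 Adm"
proof (rule not_le_e_if_unrealisable[OF small_afs_in_kbs(2)], simp_all)
  fix D :: adf
  show "adm D \<noteq> mdl af_self_attacking"
    using undecided_in_adm[of D] mdl_af_self_attacking by auto
qed

lemma not_le_e_Com_Prf: "\<not> le_e F1 Com F2 Prf"
proof (rule not_le_e_if_unrealisable[OF small_afs_in_kbs(3)], simp_all)
  fix D :: adf
  show "prefd D \<noteq> cmp af_mutual_attack"
  proof
    assume eq: "prefd D = cmp af_mutual_attack"
    have "undecided(0 := T, 1 := F) \<in> prefd D" "undecided \<in> prefd D"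
      using eq models_af_mutual_attack(1) mdl_subset_cmp undecided_in_cmp_af_mutual_attack by auto
    then show False
      using prefd_undecided_unique[of D "undecided(0 := T, 1 := F)"] by simp
  qed
qed

lemma not_le_e_Prf_Com: "\<not> le_e F1 Prf F2 Com"
proof (rule not_le_e_if_unrealisable[OF small_afs_in_kbs(3)], simp_all)
  fix D :: adf
  show "cmp D \<noteq> prefd af_mutual_attack"
  proof
    assume eq: "cmp D = prefd af_mutual_attack"
    then have "undecided(0 := T, 1 := F) \<in> cmp D" "undecided(0 := F, 1 := T) \<in> cmp D"
      using models_af_mutual_attack mdl_subset_prefd by auto
    then have "undecided \<in> cmp D"
      using models_af_mutual_attack_disagree by (rule undecided_in_cmp_if_disagreeing)
    then show False
      using eq undecided_notin_prefd_af_mutual_attack by simp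
  qed
qed

lemma not_le_e_Com_Mod: "\<not> le_e F1 Com F2 Mod"
proof (rule not_le_e_if_unrealisable[OF small_afs_in_kbs(2)], simp_all)
  fix D :: adf assume "stmts D = {0}"
  then show "mdl D \<noteq> cmp af_self_attacking"
    using undecided_notin_mdl[of D] undecided_in_cmp_af_self_attacking by auto
qed

lemma not_le_e_Mod_Com: "\<not> le_e F1 Mod F2 Com"
proof (rule not_le_e_if_unrealisable[OF small_afs_in_kbs(3)], simp_all)
  fix D :: adf
  show "cmp D \<noteq> mdl af_mutual_attack"
  proof
    assume eq: "cmp D = mdl af_mutual_attack"
    then have "undecided(0 := T, 1 := F) \<in> cmp D" "undecided(0 := F, 1 := T) \<in> cmp D"
      using models_af_mutual_attack by auto
    then have "undecided \<in> cmp D"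
      using models_af_mutual_attack_disagree by (rule undecided_in_cmp_if_disagreeing)
    then show False
      using eq undecided_notin_mdl[of af_mutual_attack] by simp
  qed
qed

lemma not_le_e_Prf_Mod: "\<not> le_e F1 Prf F2 Mod"
proof (rule not_le_e_if_unrealisable[OF small_afs_in_kbs(2)], simp_all)
  fix D :: adf assume "stmts D = {0}"
  then show "mdl D \<noteq> prefd af_self_attacking"
    using undecided_notin_mdl[of D] by (auto simp: prefd_def adm_af_self_attacking)
qed

lemma not_le_e_Mod_Prf: "\<not> le_e F1 Mod F2 Prf"
proof (rule not_le_e_if_unrealisable[OF small_afs_in_kbs(2)], simp_all)
  fix D :: adf assume "stmts D = {0}"
  then show "prefd D \<noteq> mdl af_self_attacking"
    using prefd_nonempty[of D] mdl_af_self_attacking by simp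
qed

theorem proposition6:
  fixes F1 F2 :: formalism and s1 s2 :: semantics
  assumes "s1 \<noteq> s2"
  shows "\<not> le_e F1 s1 F2 s2 \<and> \<not> le_e F2 s2 F1 s1"
  using assms
  by (cases s1; cases s2)
    (simp_all add: not_le_e_Adm_Com not_le_e_Com_Adm not_le_e_Adm_Prf not_le_e_Prf_Adm
      not_le_e_Adm_Mod not_le_e_Mod_Adm not_le_e_Com_Prf not_le_e_Prf_Com
      not_le_e_Com_Mod not_le_e_Mod_Com not_le_e_Prf_Mod not_le_e_Mod_Prf)

end
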